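(* Let $R$ be an integral domain and $M$ an $R$-module. If $x\in M$ is not $R$-torsion and $y\in M$ is $R$-torsion, then $[x]=[x+y]$ in $\mathbb{P}(M)$.
   Context: For an $R$-module $M$ let $M^\circ=M\setminus\{0\}$; define $x\sim'y$ on $M^\circ$ if there exist $m\in M$ and $r,s\in R$ with $x=rm$, $y=sm$; let $\sim$ be the equivalence relation generated by $\sim'$; and let $\mathbb{P}(M)=M^\circ/\sim$, with $[x]$ the class of $x$. An element $y$ is $R$-torsion if $ry=0$ for some nonzero $r\in R$. *)

theory Defs
  imports Complex_Main
begin

text \<open>Modules over a commutative ring are given by the library locale module scale
  (scalars of type class comm_ring_1, here idom for an integral domain).\<close>

definition proj_pre :: "('a::comm_ring_1 \<Rightarrow> 'b::ab_group_add \<Rightarrow> 'b) \<Rightarrow> 'b \<Rightarrow> 'b \<Rightarrow> bool" where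
  "proj_pre scale x y \<longleftrightarrow> x \<noteq> 0 \<and> y \<noteq> 0 \<and> (\<exists>m r s. x = scale r m \<and> y = scale s m)"

definition proj_rel :: "('a::comm_ring_1 \<Rightarrow> 'b::ab_group_add \<Rightarrow> 'b) \<Rightarrow> 'b \<Rightarrow> 'b \<Rightarrow> bool" where
  "proj_rel scale x y \<longleftrightarrow> x \<noteq> 0 \<and> y \<noteq> 0 \<and> equivclp (proj_pre scale) x y"

definition proj_class :: "('a::comm_ring_1 \<Rightarrow> 'b::ab_group_add \<Rightarrow> 'b) \<Rightarrow> 'b \<Rightarrow> 'b set" where
  "proj_class scale x = {y. proj_rel scale x y}"

definition torsion_elem :: "('a::comm_ring_1 \<Rightarrow> 'b::ab_group_add \<Rightarrow> 'b) \<Rightarrow> 'b \<Rightarrow> bool" where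
  "torsion_elem scale y \<longleftrightarrow> (\<exists>r. r \<noteq> 0 \<and> scale r y = 0)"

end

theory Submission
  imports Defs
begin

text \<open>If \<open>r \<noteq> 0\<close> kills the torsion element \<open>y\<close>, then \<open>r x = r (x + y)\<close>, and this common
  multiple is nonzero because \<open>x\<close> is not torsion. So \<open>x\<close> and \<open>x + y\<close> are both related to
  \<open>r x\<close> by the generating relation, hence lie in the same class.\<close>

lemma proj_class_eq_if_proj_rel:
  assumes "proj_rel scale x x'"
  shows "proj_class scale x = proj_class scale x'"
  using assms unfolding proj_class_def proj_rel_def
  by (meson equivclp_sym equivclp_trans)

lemma proj_rel_if_common_multiple:
  assumes "x \<noteq> 0" and "x' \<noteq> 0"
    and "proj_pre scale x z" and "proj_pre scale x' z"
  shows "proj_rel scale x x'"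
  using assms unfolding proj_rel_def
  by (meson equivclp_sym equivclp_trans r_into_equivclp)

context module
begin

lemma proj_pre_scale:
  assumes "x \<noteq> 0" and "scale r x \<noteq> 0"
  shows "proj_pre scale x (scale r x)"
  unfolding proj_pre_def using assms by (metis scale_one)

lemma nonzero_if_not_torsion:
  assumes "\<not> torsion_elem scale x"
  shows "x \<noteq> 0"
  using assms unfolding torsion_elem_def by (metis one_neq_zero scale_zero_right)

end

lemma not_torsion_add_torsion:
  fixes scale :: "'a::idom \<Rightarrow> 'b::ab_group_add \<Rightarrow> 'b"
  assumes "module scale"
    and x: "\<not> torsion_elem scale x" and y: "torsion_elem scale y"
  shows "\<not> torsion_elem scale (x + y)"
proof
  interpret module scale by fact
  assume "torsion_elem scale (x + y)"
  then obtain s where "s \<noteq> 0" and s: "scale s (x + y) = 0"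
    unfolding torsion_elem_def by blast
  obtain r where "r \<noteq> 0" and r: "scale r y = 0"
    using y unfolding torsion_elem_def by blast
  have "scale (r * s) x = scale (r * s) (x + y) - scale s (scale r y)"
    by (simp add: scale_right_distrib mult.commute)
  also have "\<dots> = 0"
    using r s by (metis scale_scale scale_zero_right diff_zero)
  finally show False
    using x \<open>r \<noteq> 0\<close> \<open>s \<noteq> 0\<close> unfolding torsion_elem_def by (metis mult_eq_0_iff)
qed

theorem theorem4p16:
  fixes scale :: "'a::idom \<Rightarrow> 'b::ab_group_add \<Rightarrow> 'b" and x y :: 'b
  assumes "module scale"
    and "\<not> torsion_elem scale x"
    and "torsion_elem scale y"
  shows "x \<noteq> 0 \<and> x + y \<noteq> 0 \<and> proj_class scale x = proj_class scale (x + y)"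
proof -
  interpret module scale by fact
  obtain r where "r \<noteq> 0" and r: "scale r y = 0"
    using assms(3) unfolding torsion_elem_def by blast
  have x: "x \<noteq> 0"
    using assms(2) by (rule nonzero_if_not_torsion)
  have xy: "x + y \<noteq> 0"
    using not_torsion_add_torsion[OF assms] by (rule nonzero_if_not_torsion)
  have rx: "scale r x \<noteq> 0"
    using assms(2) \<open>r \<noteq> 0\<close> unfolding torsion_elem_def by blast
  have "scale r (x + y) = scale r x"
    using r by (simp add: scale_right_distrib)
  then have "proj_pre scale (x + y) (scale r x)"
    using proj_pre_scale[OF xy] rx by metis
  then have "proj_rel scale x (x + y)"
    using proj_rel_if_common_multiple[OF x xy] proj_pre_scale[OF x rx] by blast
  then show ?thesis
    using x xy by (simp add: proj_class_eq_if_proj_rel)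
qed

end
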